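(* Let $V,W$ be subsets of normed spaces over $\mathbb{R}$ or $\mathbb{C}$, $T:V\to W$, let $\emptyset\neq C\subseteq T(V)$ be a Chebyshev set in $W$, and $P_C:W\to W$ the projection onto $C$. For $w\in W$ let $B_w=\arg\min\{\|v\|:v\in V,\ P_C(T(v))=P_C(w)\}$ and let $W'$ be the set of $w\in W$ for which this minimum is attained. (1) If $w\in W'\setminus C$ then $P_C(w)\in W'\cap C$; and any operator $S:W'\to V$ with $S(w)\in B_w$ for $w\in W'\cap C$ and $S(w)=S(P_C(w))$ for $w\in W'\setminus C$ is a pseudo-inverse of $P_C\circ T$ on $W'$. (2) If in addition $T$ is continuous, $W$ is a Hilbert space, and every closed ball in $V$ is compact, then $W'=W$.
   Context: A nonempty subset $C$ of a metric space $W$ is a Chebyshev set if every $w\in W$ has exactly one nearest point in $C$; $P_C(w)$ is that point. For subsets $V,W$ of normed spaces, $T':V\to W$ and $E\subseteq W$, an operator $S:E\to V$ is a pseudo-inverse of $T'$ on $E$ if: (BAS) for every $w\in E$, the minimum $m_w=\min_{v\in V}\|T'(v)-w\|$ is attained, the norm attains its minimum on $\{v\in V:\|T'(v)-w\|=m_w\}$, and $S(w)\in\arg\min\{\|v\|:v\in V,\ \|T'(v)-w\|=m_w\}$; and (MP2) $S(T'(S(w)))=S(w)$ for all $w\in E$. *)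

theory Defs
  imports "HOL-Analysis.Analysis"
begin

definition chebyshev :: "'a::metric_space set \<Rightarrow> 'a set \<Rightarrow> bool" where
  "chebyshev W C \<longleftrightarrow> C \<noteq> {} \<and> C \<subseteq> W \<and>
     (\<forall>w\<in>W. \<exists>!c. c \<in> C \<and> (\<forall>c'\<in>C. dist w c \<le> dist w c'))"

definition proj :: "'a::metric_space set \<Rightarrow> 'a \<Rightarrow> 'a" where
  "proj C w = (THE c. c \<in> C \<and> (\<forall>c'\<in>C. dist w c \<le> dist w c'))"

definition argmin_on :: "('a \<Rightarrow> real) \<Rightarrow> 'a set \<Rightarrow> 'a set" where
  "argmin_on f A = {x \<in> A. \<forall>y\<in>A. f x \<le> f y}"

text \<open>Pseudo-inverse S of T' : V \<rightarrow> W on E (conditions BAS and MP2).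
  For w in E, the set of v in V with norm (T' v - w) = m_w is exactly
  argmin_on (\<lambda>v. norm (T' v - w)) V.\<close>
definition pseudo_inverse ::
  "'a::real_normed_vector set \<Rightarrow> ('a \<Rightarrow> 'b::real_normed_vector) \<Rightarrow> 'b set \<Rightarrow> ('b \<Rightarrow> 'a) \<Rightarrow> bool" where
  "pseudo_inverse V T' E S \<longleftrightarrow>
     (\<forall>w\<in>E.
        argmin_on (\<lambda>v. norm (T' v - w)) V \<noteq> {} \<and>
        argmin_on norm (argmin_on (\<lambda>v. norm (T' v - w)) V) \<noteq> {} \<and>
        S w \<in> argmin_on norm (argmin_on (\<lambda>v. norm (T' v - w)) V)) \<and>
     (\<forall>w\<in>E. T' (S w) \<in> E \<and> S (T' (S w)) = S w)"

definition Bset :: "'a::real_normed_vector set \<Rightarrow> ('a \<Rightarrow> 'b::real_normed_vector) \<Rightarrow> 'b set \<Rightarrow> 'b \<Rightarrow> 'a set" where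
  "Bset V T C w = argmin_on norm {v \<in> V. proj C (T v) = proj C w}"

definition Wprime :: "'a::real_normed_vector set \<Rightarrow> ('a \<Rightarrow> 'b::real_normed_vector) \<Rightarrow> 'b set \<Rightarrow> 'b set \<Rightarrow> 'b set" where
  "Wprime V T C W = {w \<in> W. Bset V T C w \<noteq> {}}"

end

theory Submission
  imports Defs
begin

lemma proj_nearest:
  assumes "chebyshev W C" "w \<in> W"
  shows "proj C w \<in> C" "\<forall>c'\<in>C. dist w (proj C w) \<le> dist w c'"
proof -
  from assms have "\<exists>!c. c \<in> C \<and> (\<forall>c'\<in>C. dist w c \<le> dist w c')"
    unfolding chebyshev_def by blast
  then have "proj C w \<in> C \<and> (\<forall>c'\<in>C. dist w (proj C w) \<le> dist w c')"
    unfolding proj_def by (rule theI')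
  then show "proj C w \<in> C" "\<forall>c'\<in>C. dist w (proj C w) \<le> dist w c'"
    by auto
qed

lemma proj_eq_iff_nearest:
  assumes "chebyshev W C" "w \<in> W" "c \<in> C"
  shows "proj C w = c \<longleftrightarrow> (\<forall>c'\<in>C. dist w c \<le> dist w c')"
proof
  assume "proj C w = c"
  then show "\<forall>c'\<in>C. dist w c \<le> dist w c'" using proj_nearest(2)[OF assms(1,2)] by simp
next
  assume nearest: "\<forall>c'\<in>C. dist w c \<le> dist w c'"
  from assms(1,2) have "\<exists>!c. c \<in> C \<and> (\<forall>c'\<in>C. dist w c \<le> dist w c')"
    unfolding chebyshev_def by blast
  from the1_equality[OF this] show "proj C w = c"
    using assms(3) nearest unfolding proj_def by blast
qed

lemma proj_of_mem:
  assumes "chebyshev W C" "c \<in> C"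
  shows "proj C c = c"
proof -
  have "c \<in> W" using assms unfolding chebyshev_def by auto
  then show ?thesis by (simp add: proj_eq_iff_nearest[OF assms(1) _ assms(2)])
qed

lemma proj_proj:
  assumes "chebyshev W C" "w \<in> W"
  shows "proj C (proj C w) = proj C w"
  using proj_of_mem[OF assms(1) proj_nearest(1)[OF assms]] .

lemma image_proj_comp:
  assumes "chebyshev W C" "T ` V \<subseteq> W" "C \<subseteq> T ` V"
  shows "(proj C \<circ> T) ` V = C"
proof
  show "(proj C \<circ> T) ` V \<subseteq> C" using assms(2) proj_nearest(1)[OF assms(1)] by auto
  show "C \<subseteq> (proj C \<circ> T) ` V"
  proof
    fix c assume "c \<in> C"
    then obtain v where "v \<in> V" "c = T v" using assms(3) by blast
    then show "c \<in> (proj C \<circ> T) ` V" using proj_of_mem[OF assms(1) \<open>c \<in> C\<close>] by force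
  qed
qed

lemma argmin_dist_proj_comp:
  assumes "chebyshev W C" "T ` V \<subseteq> W" "C \<subseteq> T ` V" "w \<in> W"
  shows "argmin_on (\<lambda>v. norm ((proj C \<circ> T) v - w)) V = {v \<in> V. proj C (T v) = proj C w}"
proof -
  have dist_form: "(\<lambda>v. norm ((proj C \<circ> T) v - w)) = (\<lambda>v. dist w ((proj C \<circ> T) v))"
    by (simp add: dist_norm norm_minus_commute)
  have "(\<forall>u\<in>V. dist w ((proj C \<circ> T) v) \<le> dist w ((proj C \<circ> T) u))
      \<longleftrightarrow> (\<forall>c'\<in>(proj C \<circ> T) ` V. dist w ((proj C \<circ> T) v) \<le> dist w c')" for v
    by simp
  then have nearest: "(\<forall>u\<in>V. dist w ((proj C \<circ> T) v) \<le> dist w ((proj C \<circ> T) u))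
      \<longleftrightarrow> (\<forall>c'\<in>C. dist w (proj C (T v)) \<le> dist w c')" for v
    unfolding image_proj_comp[OF assms(1-3)] by simp
  have "proj C (T v) = proj C w \<longleftrightarrow> (\<forall>c'\<in>C. dist w (proj C (T v)) \<le> dist w c')"
    if "v \<in> V" for v
  proof -
    have "proj C (T v) \<in> C" using that assms(2) proj_nearest(1)[OF assms(1)] by auto
    then show ?thesis using proj_eq_iff_nearest[OF assms(1,4)] by metis
  qed
  then show ?thesis
    unfolding argmin_on_def dist_form using nearest by auto
qed

lemma argmin_on_subset: "argmin_on f A \<subseteq> A"
  unfolding argmin_on_def by blast

lemma Bset_proj:
  assumes "chebyshev W C" "w \<in> W"
  shows "Bset V T C (proj C w) = Bset V T C w"
  unfolding Bset_def using proj_proj[OF assms] by simp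

lemma proj_mem_Wprime:
  assumes "chebyshev W C" "w \<in> Wprime V T C W"
  shows "proj C w \<in> Wprime V T C W \<inter> C"
proof -
  have w: "w \<in> W" "Bset V T C w \<noteq> {}" using assms(2) unfolding Wprime_def by auto
  have "proj C w \<in> C" using proj_nearest(1)[OF assms(1) w(1)] .
  moreover have "C \<subseteq> W" using assms(1) unfolding chebyshev_def by auto
  moreover have "Bset V T C (proj C w) \<noteq> {}" using w Bset_proj[OF assms(1) w(1)] by metis
  ultimately show ?thesis unfolding Wprime_def by auto
qed

lemma pseudo_inverse_proj_comp:
  fixes S :: "'b::real_normed_vector \<Rightarrow> 'a::real_normed_vector"
  assumes ch: "chebyshev W C" and "T ` V \<subseteq> W" "C \<subseteq> T ` V"
    and on_C: "\<forall>w \<in> Wprime V T C W \<inter> C. S w \<in> Bset V T C w"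
    and off_C: "\<forall>w \<in> Wprime V T C W - C. S w = S (proj C w)"
  shows "pseudo_inverse V (proj C \<circ> T) (Wprime V T C W) S"
proof -
  have S_in_B: "S w \<in> Bset V T C w" if w: "w \<in> Wprime V T C W" for w
  proof (cases "w \<in> C")
    case True then show ?thesis using on_C w by auto
  next
    case False
    have "w \<in> W" using w unfolding Wprime_def by auto
    have "S (proj C w) \<in> Bset V T C (proj C w)" using on_C proj_mem_Wprime[OF ch w] by blast
    then show ?thesis
      using False w off_C Bset_proj[OF ch \<open>w \<in> W\<close>] by (metis DiffI)
  qed
  show ?thesis unfolding pseudo_inverse_def
  proof (intro conjI ballI)
    fix w assume w: "w \<in> Wprime V T C W"
    then have "w \<in> W" unfolding Wprime_def by auto
    note argmin = argmin_dist_proj_comp[OF assms(1-3) this]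
    show S_min: "S w \<in> argmin_on norm (argmin_on (\<lambda>v. norm ((proj C \<circ> T) v - w)) V)"
      using S_in_B[OF w] unfolding argmin Bset_def .
    then show "argmin_on norm (argmin_on (\<lambda>v. norm ((proj C \<circ> T) v - w)) V) \<noteq> {}"
      by blast
    from subsetD[OF argmin_on_subset S_min]
    show "argmin_on (\<lambda>v. norm ((proj C \<circ> T) v - w)) V \<noteq> {}"
      by blast
    have Sw: "proj C (T (S w)) = proj C w"
      using S_in_B[OF w] unfolding Bset_def argmin_on_def by auto
    show "(proj C \<circ> T) (S w) \<in> Wprime V T C W"
      using Sw proj_mem_Wprime[OF ch w] by simp
    show "S ((proj C \<circ> T) (S w)) = S w"
    proof (cases "w \<in> C")
      case True
      then show ?thesis using Sw proj_of_mem[OF ch True] by simp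
    next
      case False
      then show ?thesis using Sw off_C w by simp
    qed
  qed
qed

lemma closed_nearest_point_set:
  "closed {x. \<forall>c'\<in>C. dist x c \<le> dist x c'}"
proof -
  have "{x. \<forall>c'\<in>C. dist x c \<le> dist x c'} = (\<Inter>c'\<in>C. {x. dist x c \<le> dist x c'})"
    by auto
  moreover have "closed {x. dist x c \<le> dist x c'}" for c'
    by (rule closed_Collect_le) (intro continuous_on_dist continuous_on_id continuous_on_const)+
  ultimately show ?thesis by (simp add: closed_INT)
qed

lemma argmin_norm_closed_preimage_nonempty:
  fixes T :: "'a::real_normed_vector \<Rightarrow> 'b::topological_space"
  assumes "continuous_on V T" "closed F" "\<forall>x\<in>V. \<forall>r. compact (cball x r \<inter> V)"
    and "v0 \<in> V" "T v0 \<in> F"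
  shows "argmin_on norm {v \<in> V. T v \<in> F} \<noteq> {}"
proof -
  \<comment> \<open>every candidate of norm at most \<open>norm v0\<close> lies in this ball around \<open>v0\<close>\<close>
  define K where "K = cball v0 (2 * norm v0) \<inter> V"
  have "compact K" using assms(3,4) K_def by auto
  moreover have "continuous_on K T" using assms(1) K_def continuous_on_subset by blast
  ultimately have "closed (K \<inter> T -` F)"
    using continuous_closed_preimage compact_imp_closed assms(2) by blast
  then have "compact (K \<inter> T -` F \<inter> K)"
    using closed_Int_compact \<open>compact K\<close> by blast
  moreover have "K \<inter> T -` F \<inter> K = K \<inter> T -` F" by blast
  ultimately have "compact (K \<inter> T -` F \<inter> cball 0 (norm v0))"
    using compact_Int_closed closed_cball by metis
  moreover have v0_in: "v0 \<in> K \<inter> T -` F \<inter> cball 0 (norm v0)"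
    using assms(4,5) K_def by simp
  ultimately obtain m where m: "m \<in> K \<inter> T -` F \<inter> cball 0 (norm v0)"
    and m_min: "\<forall>y \<in> K \<inter> T -` F \<inter> cball 0 (norm v0). norm m \<le> norm y"
    using continuous_attains_inf[OF _ _ continuous_on_norm_id] by blast
  have "norm m \<le> norm y" if y: "y \<in> V" "T y \<in> F" for y
  proof (cases "norm y \<le> norm v0")
    case True
    then have "dist v0 y \<le> 2 * norm v0"
      using norm_triangle_ineq4[of v0 y] by (simp add: dist_norm)
    then show ?thesis using y True m_min K_def by auto
  next
    case False
    have "norm m \<le> norm v0" using m_min v0_in by blast
    with False show ?thesis by linarith
  qed
  then have "m \<in> argmin_on norm {v \<in> V. T v \<in> F}"
    using m K_def unfolding argmin_on_def by auto
  then show ?thesis by blast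
qed

lemma Wprime_eq_W:
  assumes ch: "chebyshev W C" and "T ` V \<subseteq> W" "C \<subseteq> T ` V"
    and "continuous_on V T" "\<forall>x\<in>V. \<forall>r. compact (cball x r \<inter> V)"
  shows "Wprime V T C W = W"
proof -
  have "Bset V T C w \<noteq> {}" if w: "w \<in> W" for w
  proof -
    define F where "F = {x. \<forall>c'\<in>C. dist x (proj C w) \<le> dist x c'}"
    have "proj C w \<in> C" using proj_nearest(1)[OF ch w] .
    then obtain v0 where v0: "v0 \<in> V" "proj C (T v0) = proj C w"
      using image_proj_comp[OF assms(1-3)] by (metis comp_apply imageE)
    have "proj C (T v) = proj C w \<longleftrightarrow> T v \<in> F" if "v \<in> V" for v
      using proj_eq_iff_nearest[OF ch _ \<open>proj C w \<in> C\<close>, of "T v"] that assms(2) F_def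
      by blast
    then have fibre: "{v \<in> V. proj C (T v) = proj C w} = {v \<in> V. T v \<in> F}"
      by blast
    have "closed F" unfolding F_def by (rule closed_nearest_point_set)
    moreover have "T v0 \<in> F" using v0 fibre by blast
    ultimately show ?thesis
      unfolding Bset_def fibre
      using argmin_norm_closed_preimage_nonempty[OF assms(4) _ assms(5) v0(1)] by blast
  qed
  then show ?thesis unfolding Wprime_def by auto
qed

theorem mainTheorem11:
  shows
  "(\<forall>(V::'a::real_normed_vector set) (W::'b::real_normed_vector set) (T::'a \<Rightarrow> 'b) C.
      T ` V \<subseteq> W \<and> C \<subseteq> T ` V \<and> chebyshev W C \<longrightarrow>
        (\<forall>w \<in> Wprime V T C W - C. proj C w \<in> Wprime V T C W \<inter> C) \<and>
        (\<forall>S::'b \<Rightarrow> 'a.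
            (\<forall>w \<in> Wprime V T C W \<inter> C. S w \<in> Bset V T C w) \<and>
            (\<forall>w \<in> Wprime V T C W - C. S w = S (proj C w))
          \<longrightarrow> pseudo_inverse V (proj C \<circ> T) (Wprime V T C W) S))
   \<and>
   (\<forall>(V::'c::real_normed_vector set) (W::'d::{real_inner,complete_space} set) (T::'c \<Rightarrow> 'd) C.
      T ` V \<subseteq> W \<and> C \<subseteq> T ` V \<and> chebyshev W C \<and>
      continuous_on V T \<and> subspace W \<and> closed W \<and>
      (\<forall>x\<in>V. \<forall>r. compact (cball x r \<inter> V))
      \<longrightarrow> Wprime V T C W = W)"
proof (rule conjI; intro allI impI; elim conjE)
  fix V :: "'a set" and W :: "'b set" and T C
  assume TV: "T ` V \<subseteq> W" and CT: "C \<subseteq> T ` V" and ch: "chebyshev W C"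
  show "(\<forall>w \<in> Wprime V T C W - C. proj C w \<in> Wprime V T C W \<inter> C) \<and>
        (\<forall>S::'b \<Rightarrow> 'a.
            (\<forall>w \<in> Wprime V T C W \<inter> C. S w \<in> Bset V T C w) \<and>
            (\<forall>w \<in> Wprime V T C W - C. S w = S (proj C w))
          \<longrightarrow> pseudo_inverse V (proj C \<circ> T) (Wprime V T C W) S)"
    using proj_mem_Wprime[OF ch] pseudo_inverse_proj_comp[OF ch TV CT] by blast
next
  fix V :: "'c set" and W :: "'d set" and T C
  assume "T ` V \<subseteq> W" "C \<subseteq> T ` V" "chebyshev W C" "continuous_on V T"
    "\<forall>x\<in>V. \<forall>r. compact (cball x r \<inter> V)"
  then show "Wprime V T C W = W" by (intro Wprime_eq_W)
qed

end
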